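(* Let $L = L_p + \varepsilon L_d \in \mathbb{DH}[t]$ be a line polynomial and $h \in \mathbb{R}[t]$ nonzero. Suppose there is a motion polynomial $C = P + \varepsilon D \in \mathbb{DH}[t]$ satisfying $$P\mathbf{k}\overline{P} = hL_p,\qquad -P\mathbf{k}\overline{D} - D\mathbf{k}\overline{P} = hL_d,\qquad P\overline{D} + D\overline{P} = 0,$$ and let $f \in \mathbb{R}[t]$ be a quadratic polynomial irreducible over $\mathbb{R}$ which divides $h/\gcd(\operatorname{rgcd}(L_p), h)$ and whose multiplicity as a factor of $h$ is one. Then there exists a motion polynomial $\tilde C = \tilde P + \varepsilon\tilde D$ satisfying the same three equations with $h$ replaced by $h/f$.
   Context: $\mathbb{H}$ denotes the real quaternions with units $\mathbf{i},\mathbf{j},\mathbf{k}$ and conjugation $\overline{p_0 + p_1\mathbf{i} + p_2\mathbf{j} + p_3\mathbf{k}} = p_0 - p_1\mathbf{i} - p_2\mathbf{j} - p_3\mathbf{k}$; $\mathbb{DH} = \mathbb{H} + \varepsilon\mathbb{H}$ with $\varepsilon^2=0$, $\varepsilon$ central. $\mathbb{H}[t]$, $\mathbb{DH}[t]$ are polynomial rings in a real indeterminate $t$ commuting with the coefficients; conjugation acts coefficientwise. A motion polynomial is $C = P + \varepsilon D \in \mathbb{DH}[t]$ with $P \ne 0$ and $P\overline{D} + D\overline{P} = 0$. A line polynomial is $L = L_p + \varepsilon L_d \in \mathbb{DH}[t]$ with $L_p, L_d$ vectorial (zero scalar part), $L_p\overline{L_d} + L_d\overline{L_p} = 0$, and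 $L_p \neq 0$. For $A \in \mathbb{H}[t]$, $\operatorname{rgcd}(A)$ is the monic gcd in $\mathbb{R}[t]$ of its four real coefficient polynomials. The three equations are equivalent to $C_\varepsilon\mathbf{k}\overline{C_\varepsilon} = hL$ (with $C_\varepsilon = P - \varepsilon D$) together with the Study condition. *)

theory Defs
  imports "HOL-Computational_Algebra.Computational_Algebra" "HOL-Computational_Algebra.Field_as_Ring"
begin

text \<open>Quaternions with coefficients in a commutative ring. With coefficients in
  real poly this is exactly H[t] (t commutes with the coefficients).
  Quat a b c d stands for a + b i + c j + d k.\<close>

datatype 'a quat = Quat (q0: 'a) (q1: 'a) (q2: 'a) (q3: 'a)

definition qadd :: "'a::comm_ring_1 quat \<Rightarrow> 'a quat \<Rightarrow> 'a quat" where
  "qadd p q = Quat (q0 p + q0 q) (q1 p + q1 q) (q2 p + q2 q) (q3 p + q3 q)"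

definition qneg :: "'a::comm_ring_1 quat \<Rightarrow> 'a quat" where
  "qneg p = Quat (- q0 p) (- q1 p) (- q2 p) (- q3 p)"

definition qmult :: "'a::comm_ring_1 quat \<Rightarrow> 'a quat \<Rightarrow> 'a quat" where
  "qmult p q = Quat
     (q0 p * q0 q - q1 p * q1 q - q2 p * q2 q - q3 p * q3 q)
     (q0 p * q1 q + q1 p * q0 q + q2 p * q3 q - q3 p * q2 q)
     (q0 p * q2 q - q1 p * q3 q + q2 p * q0 q + q3 p * q1 q)
     (q0 p * q3 q + q1 p * q2 q - q2 p * q1 q + q3 p * q0 q)"

definition qcnj :: "'a::comm_ring_1 quat \<Rightarrow> 'a quat" where
  "qcnj p = Quat (q0 p) (- q1 p) (- q2 p) (- q3 p)"

definition qscale :: "'a::comm_ring_1 \<Rightarrow> 'a quat \<Rightarrow> 'a quat" where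
  "qscale c p = Quat (c * q0 p) (c * q1 p) (c * q2 p) (c * q3 p)"

definition qzero :: "'a::comm_ring_1 quat" where
  "qzero = Quat 0 0 0 0"

definition qk :: "'a::comm_ring_1 quat" where
  "qk = Quat 0 0 0 1"

definition vectorial :: "'a::comm_ring_1 quat \<Rightarrow> bool" where
  "vectorial p \<longleftrightarrow> q0 p = 0"

text \<open>Motion polynomial C = P + eps D.\<close>
definition motion_poly :: "real poly quat \<Rightarrow> real poly quat \<Rightarrow> bool" where
  "motion_poly P D \<longleftrightarrow> P \<noteq> qzero \<and> qadd (qmult P (qcnj D)) (qmult D (qcnj P)) = qzero"

text \<open>Line polynomial L = Lp + eps Ld.\<close>
definition line_poly :: "real poly quat \<Rightarrow> real poly quat \<Rightarrow> bool" where
  "line_poly Lp Ld \<longleftrightarrow> vectorial Lp \<and> vectorial Ld \<and>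
     qadd (qmult Lp (qcnj Ld)) (qmult Ld (qcnj Lp)) = qzero \<and> Lp \<noteq> qzero"

text \<open>rgcd: monic gcd of the four real coefficient polynomials
  (gcd on real poly is normalized, i.e. monic).\<close>
definition rgcd :: "real poly quat \<Rightarrow> real poly" where
  "rgcd p = gcd (q0 p) (gcd (q1 p) (gcd (q2 p) (q3 p)))"

definition three_eqs :: "real poly quat \<Rightarrow> real poly quat \<Rightarrow> real poly \<Rightarrow>
    real poly quat \<Rightarrow> real poly quat \<Rightarrow> bool" where
  "three_eqs P D h Lp Ld \<longleftrightarrow>
     qmult (qmult P qk) (qcnj P) = qscale h Lp \<and>
     qadd (qneg (qmult (qmult P qk) (qcnj D))) (qneg (qmult (qmult D qk) (qcnj P))) = qscale h Ld \<and>
     qadd (qmult P (qcnj D)) (qmult D (qcnj P)) = qzero"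

end

theory Submission
  imports Defs
begin

(* Write f = c ((t - p)^2 + q^2) and evaluate at its complex root z = p + q i. As f divides h,
   P(z) k conj P(z) = 0, so P(z) (1 + sigma k) = 0 for some sigma = +-i; the Study condition and
   the dual equation then give D(z) (1 + sigma k) = 0 as well. Here P(z) <> 0 because f is a simple
   factor of h not dividing gcd (rgcd Lp) h. A linear Q with conj Q k Q = f k whose conjugate at z
   is a right multiple of 1 + sigma k makes P conj Q and D conj Q divisible by f, and the
   quotients P' = P conj Q / f, D' = D conj Q / f satisfy the equations for h / f. *)

section \<open>Quaternion algebra\<close>

lemma qmult_assoc: "qmult (qmult a b) c = qmult a (qmult b c)"
  for a b c :: "'a::comm_ring_1 quat"
  by (simp add: qmult_def algebra_simps)

lemma qcnj_qmult: "qcnj (qmult a b) = qmult (qcnj b) (qcnj a)"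
  for a b :: "'a::comm_ring_1 quat"
  by (simp add: qmult_def qcnj_def algebra_simps)

lemma qcnj_qcnj [simp]: "qcnj (qcnj a) = a"
  by (simp add: qcnj_def)

lemma qmult_qscale_left: "qmult (qscale c a) b = qscale c (qmult a b)"
  for a b :: "'a::comm_ring_1 quat"
  by (simp add: qmult_def qscale_def algebra_simps)

lemma qmult_qscale_right: "qmult a (qscale c b) = qscale c (qmult a b)"
  for a b :: "'a::comm_ring_1 quat"
  by (simp add: qmult_def qscale_def algebra_simps)

lemma qcnj_qscale: "qcnj (qscale c a) = qscale c (qcnj a)"
  for a :: "'a::comm_ring_1 quat"
  by (simp add: qcnj_def qscale_def)

lemma qscale_qscale: "qscale c (qscale d a) = qscale (c * d) a"
  for a :: "'a::comm_ring_1 quat"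
  by (simp add: qscale_def algebra_simps)

lemma qscale_qadd: "qscale c (qadd a b) = qadd (qscale c a) (qscale c b)"
  for a b :: "'a::comm_ring_1 quat"
  by (simp add: qadd_def qscale_def algebra_simps)

lemma qscale_qneg: "qscale c (qneg a) = qneg (qscale c a)"
  for a :: "'a::comm_ring_1 quat"
  by (simp add: qneg_def qscale_def)

lemma qscale_qzero: "qscale c qzero = qzero"
  by (simp add: qzero_def qscale_def)

lemma qmult_qzero_left: "qmult qzero a = qzero"
  by (simp add: qmult_def qzero_def)

lemma qscale_zero_left: "qscale 0 a = qzero"
  by (simp add: qscale_def qzero_def)

lemma qscale_eq_qzero_iff: "qscale c a = qzero \<longleftrightarrow> c = 0 \<or> a = qzero"
  for a :: "'a::idom quat"
  by (cases a) (auto simp: qscale_def qzero_def)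

lemma qscale_cancel: "c \<noteq> 0 \<Longrightarrow> qscale c a = qscale c b \<Longrightarrow> a = b"
  for a b :: "'a::idom quat"
  by (cases a; cases b) (simp add: qscale_def)

lemmas qscale_simps = qmult_qscale_left qmult_qscale_right qcnj_qscale qscale_qscale
  qscale_qadd qscale_qneg qscale_qzero

definition qnorm :: "'a::comm_ring_1 quat \<Rightarrow> 'a" where
  "qnorm a = q0 a * q0 a + q1 a * q1 a + q2 a * q2 a + q3 a * q3 a"

lemma qmult_qcnj_left_self: "qmult (qcnj a) (qmult a b) = qscale (qnorm a) b"
  for a b :: "'a::comm_ring_1 quat"
  by (simp add: qmult_def qcnj_def qscale_def qnorm_def algebra_simps)

lemma qmult_qk_qk: "qmult (qmult a qk) qk = qneg a"
  for a :: "'a::comm_ring_1 quat"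
  by (simp add: qmult_def qk_def qneg_def)

lemma qmult_qcnj_right_sandwich:
  fixes Q X Y :: "'a::comm_ring_1 quat"
  assumes "qmult (qmult (qcnj Q) qk) Q = qscale f qk"
  shows "qmult (qmult (qmult X (qcnj Q)) qk) (qcnj (qmult Y (qcnj Q)))
           = qscale f (qmult (qmult X qk) (qcnj Y))"
proof -
  have "qmult (qmult (qmult X (qcnj Q)) qk) (qcnj (qmult Y (qcnj Q)))
      = qmult X (qmult (qmult (qmult (qcnj Q) qk) Q) (qcnj Y))"
    by (simp add: qcnj_qmult qmult_assoc)
  also have "\<dots> = qscale f (qmult (qmult X qk) (qcnj Y))"
    by (simp only: assms) (simp add: qscale_simps qmult_assoc)
  finally show ?thesis .
qed

lemma qmult_qcnj_right_norm:
  fixes Q X Y :: "'a::comm_ring_1 quat"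
  shows "qmult (qmult X (qcnj Q)) (qcnj (qmult Y (qcnj Q))) = qscale (qnorm Q) (qmult X (qcnj Y))"
  by (simp add: qcnj_qmult qmult_assoc qmult_qcnj_left_self qscale_simps)

lemma three_eqs_qmult_qcnj:
  fixes P D Q Lp Ld :: "real poly quat"
  assumes "qmult (qmult (qcnj Q) qk) Q = qscale f qk" and "three_eqs P D h Lp Ld"
  shows "three_eqs (qmult P (qcnj Q)) (qmult D (qcnj Q)) (f * h) Lp Ld"
  using assms(2)
  by (simp add: three_eqs_def qmult_qcnj_right_sandwich[OF assms(1)] qmult_qcnj_right_norm
      qscale_simps flip: qscale_qadd qscale_qneg)

lemma three_eqs_qscale_cancel:
  fixes P D Lp Ld :: "real poly quat"
  assumes "f \<noteq> 0" and "three_eqs (qscale f P) (qscale f D) (f * f * g) Lp Ld"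
  shows "three_eqs P D g Lp Ld"
proof -
  have "f * f \<noteq> 0"
    using assms(1) by simp
  then show ?thesis
    using assms(2) unfolding three_eqs_def
    by (auto simp: qscale_simps mult.assoc qscale_eq_qzero_iff
        simp flip: qscale_qadd qscale_qneg qscale_qscale dest: qscale_cancel)
qed

lemma qmult_qcnj_eq_qzero_imp:
  fixes P Q :: "'a::idom quat"
  assumes "qmult (qmult (qcnj Q) qk) Q = qscale f qk" and "f \<noteq> 0"
    and "qmult P (qcnj Q) = qzero"
  shows "P = qzero"
proof -
  have "qscale f (qmult P qk) = qmult P (qmult (qmult (qcnj Q) qk) Q)"
    by (simp add: assms(1) qscale_simps)
  also have "\<dots> = qmult (qmult (qmult P (qcnj Q)) qk) Q"
    by (simp add: qmult_assoc)
  also have "\<dots> = qzero"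
    by (simp add: assms(3) qmult_qzero_left)
  finally have "qmult P qk = qzero"
    using assms(2) by (simp add: qscale_eq_qzero_iff)
  then have "qneg P = qzero"
    by (metis qmult_qk_qk qmult_qzero_left)
  then show ?thesis
    by (cases P) (simp add: qneg_def qzero_def)
qed

lemma motion_poly_divide:
  fixes P D Q P' D' Lp Ld :: "real poly quat"
  assumes Q: "qmult (qmult (qcnj Q) qk) Q = qscale f qk" and "f \<noteq> 0"
    and "motion_poly P D" and "three_eqs P D (f * g) Lp Ld"
    and P': "qmult P (qcnj Q) = qscale f P'" and D': "qmult D (qcnj Q) = qscale f D'"
  shows "motion_poly P' D' \<and> three_eqs P' D' g Lp Ld"
proof
  have "three_eqs (qscale f P') (qscale f D') (f * f * g) Lp Ld"
    using three_eqs_qmult_qcnj[OF Q assms(4)] by (simp add: P' D' mult.assoc)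
  then show eqs: "three_eqs P' D' g Lp Ld"
    by (rule three_eqs_qscale_cancel[OF \<open>f \<noteq> 0\<close>])
  have "P \<noteq> qzero"
    using assms(3) by (simp add: motion_poly_def)
  then have "P' \<noteq> qzero"
    using qmult_qcnj_eq_qzero_imp[OF Q \<open>f \<noteq> 0\<close>] P' by (auto simp: qscale_qzero)
  with eqs show "motion_poly P' D'"
    by (simp add: motion_poly_def three_eqs_def)
qed

section \<open>Evaluation at a complex point\<close>

lemma map_poly_of_real_add: "map_poly of_real (p + q) = map_poly of_real p + map_poly of_real q"
  by (rule poly_eqI) (simp add: coeff_map_poly)

lemma map_poly_of_real_uminus: "map_poly of_real (- p) = - map_poly of_real p"
  by (rule poly_eqI) (simp add: coeff_map_poly)

lemma map_poly_of_real_diff: "map_poly of_real (p - q) = map_poly of_real p - map_poly of_real q"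
  by (rule poly_eqI) (simp add: coeff_map_poly)

lemma map_poly_of_real_mult:
  "map_poly (of_real :: real \<Rightarrow> 'a::{comm_ring_1,real_algebra_1}) (p * q) = map_poly of_real p * map_poly of_real q"
  by (rule poly_eqI) (simp add: coeff_map_poly coeff_mult)

definition eval_quat :: "'a::{comm_ring_1,real_algebra_1} \<Rightarrow> real poly quat \<Rightarrow> 'a quat" where
  "eval_quat z = map_quat (\<lambda>g. poly (map_poly of_real g) z)"

lemma eval_quat_qmult: "eval_quat z (qmult a b) = qmult (eval_quat z a) (eval_quat z b)"
  by (simp add: eval_quat_def quat.map_sel qmult_def map_poly_of_real_add map_poly_of_real_diff
      map_poly_of_real_mult)

lemma eval_quat_qadd: "eval_quat z (qadd a b) = qadd (eval_quat z a) (eval_quat z b)"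
  by (simp add: eval_quat_def quat.map_sel qadd_def map_poly_of_real_add)

lemma eval_quat_qneg: "eval_quat z (qneg a) = qneg (eval_quat z a)"
  by (simp add: eval_quat_def quat.map_sel qneg_def map_poly_of_real_uminus)

lemma eval_quat_qcnj: "eval_quat z (qcnj a) = qcnj (eval_quat z a)"
  by (simp add: eval_quat_def quat.map_sel qcnj_def map_poly_of_real_uminus)

lemma eval_quat_qscale:
  "eval_quat z (qscale c a) = qscale (poly (map_poly of_real c) z) (eval_quat z a)"
  by (simp add: eval_quat_def quat.map_sel qscale_def map_poly_of_real_mult)

lemma eval_quat_qk: "eval_quat z qk = qk"
  by (simp add: eval_quat_def qk_def)

lemma eval_quat_qzero: "eval_quat z qzero = qzero"
  by (simp add: eval_quat_def qzero_def)

lemma three_eqs_eval_root: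
  fixes z :: "'a::{comm_ring_1,real_algebra_1}"
  assumes "three_eqs P D h Lp Ld" and "poly (map_poly of_real h) z = 0"
  defines "x \<equiv> eval_quat z P" and "y \<equiv> eval_quat z D"
  shows "qmult (qmult x qk) (qcnj x) = qzero"
    and "qadd (qmult x (qcnj y)) (qmult y (qcnj x)) = qzero"
    and "qadd (qneg (qmult (qmult x qk) (qcnj y))) (qneg (qmult (qmult y qk) (qcnj x))) = qzero"
proof -
  note eval_hom = eval_quat_qmult eval_quat_qcnj eval_quat_qadd eval_quat_qneg eval_quat_qscale
    eval_quat_qk eval_quat_qzero
  have e: "qmult (qmult P qk) (qcnj P) = qscale h Lp"
    "qadd (qneg (qmult (qmult P qk) (qcnj D))) (qneg (qmult (qmult D qk) (qcnj P))) = qscale h Ld"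
    "qadd (qmult P (qcnj D)) (qmult D (qcnj P)) = qzero"
    using assms(1) by (simp_all add: three_eqs_def)
  show "qmult (qmult x qk) (qcnj x) = qzero"
    using arg_cong[OF e(1), of "eval_quat z"] by (simp add: x_def eval_hom assms(2) qscale_zero_left)
  show "qadd (qneg (qmult (qmult x qk) (qcnj y))) (qneg (qmult (qmult y qk) (qcnj x))) = qzero"
    using arg_cong[OF e(2), of "eval_quat z"]
    by (simp add: x_def y_def eval_hom assms(2) qscale_zero_left)
  show "qadd (qmult x (qcnj y)) (qmult y (qcnj x)) = qzero"
    using arg_cong[OF e(3), of "eval_quat z"] by (simp add: x_def y_def eval_hom)
qed

lemma rgcd_qscale: "rgcd (qscale c X) = normalize (c * rgcd X)"
  by (simp add: rgcd_def qscale_def gcd_mult_left normalize_gcd_right)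

lemma dvd_rgcd_iff: "f dvd rgcd X \<longleftrightarrow> (\<exists>X'. X = qscale f X')"
proof
  assume "f dvd rgcd X"
  then have "f dvd q0 X" "f dvd q1 X" "f dvd q2 X" "f dvd q3 X"
    by (auto simp: rgcd_def intro: dvd_trans)
  then have "X = qscale f (Quat (q0 X div f) (q1 X div f) (q2 X div f) (q3 X div f))"
    by (cases X) (simp add: qscale_def)
  then show "\<exists>X'. X = qscale f X'" ..
qed (auto simp: rgcd_qscale)

lemma dvd_of_common_root:
  fixes f g :: "real poly" and z :: "'a::{field,real_algebra_1}"
  assumes "irreducible f" and "poly (map_poly of_real f) z = 0" and "poly (map_poly of_real g) z = 0"
  shows "f dvd g"
proof (rule ccontr)
  assume "\<not> f dvd g"
  with assms(1) have "coprime f g"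
    by (simp add: prime_elem_imp_coprime prime_elem_iff_irreducible)
  then have "fst (bezout_coefficients f g) * f + snd (bezout_coefficients f g) * g = 1"
    using bezout_coefficients_fst_snd[of f g] by simp
  then have "poly (map_poly (of_real :: real \<Rightarrow> 'a)
      (fst (bezout_coefficients f g) * f + snd (bezout_coefficients f g) * g)) z = 1"
    by simp
  then show False
    using assms(2,3) by (simp add: map_poly_of_real_add map_poly_of_real_mult)
qed

lemma eval_quat_eq_qzero_imp_dvd_rgcd:
  fixes f :: "real poly" and z :: "'a::{field,real_algebra_1}"
  assumes "irreducible f" and "poly (map_poly of_real f) z = 0" and "eval_quat z X = qzero"
  shows "f dvd rgcd X"
proof -
  have "poly (map_poly of_real (q0 X)) z = 0" "poly (map_poly of_real (q1 X)) z = 0"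
    "poly (map_poly of_real (q2 X)) z = 0" "poly (map_poly of_real (q3 X)) z = 0"
    using assms(3) by (cases X; simp add: eval_quat_def qzero_def)+
  then show ?thesis
    by (simp add: rgcd_def dvd_of_common_root[OF assms(1,2)])
qed

lemma qmult_qcnj_factor_of_annihilated:
  fixes X Q :: "real poly quat" and z :: "'a::{field,real_algebra_1}"
  assumes "irreducible f" and "poly (map_poly of_real f) z = 0"
    and "qmult (eval_quat z X) e = qzero" and "qcnj (eval_quat z Q) = qmult e w"
  shows "\<exists>X'. qmult X (qcnj Q) = qscale f X'"
proof -
  have "eval_quat z (qmult X (qcnj Q)) = qmult (qmult (eval_quat z X) e) w"
    by (simp add: eval_quat_qmult eval_quat_qcnj assms(4) qmult_assoc)
  also have "\<dots> = qzero"
    by (simp add: assms(3) qmult_qzero_left)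
  finally show ?thesis
    using eval_quat_eq_qzero_imp_dvd_rgcd[OF assms(1,2)] by (simp add: dvd_rgcd_iff)
qed

lemma simple_factor_not_dvd_rgcd:
  fixes P Lp :: "real poly quat"
  assumes f: "irreducible f" and "h \<noteq> 0" and "multiplicity f h = 1"
    and f_dvd: "f dvd h div gcd (rgcd Lp) h"
    and P: "qmult (qmult P qk) (qcnj P) = qscale h Lp"
  shows "\<not> f dvd rgcd P"
proof
  assume "f dvd rgcd P"
  then obtain P1 where P1: "P = qscale f P1"
    by (auto simp: dvd_rgcd_iff)
  define G where "G = gcd (rgcd Lp) h"
  have hG: "h = G * (h div G)"
    by (simp add: G_def)
  then have "f dvd h"
    using f_dvd G_def by (metis dvd_mult2 mult.commute)
  then obtain k where hk: "h = f * k" ..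
  have simple: "\<not> f * f dvd h"
    using assms(2,3) f power_dvd_iff_le_multiplicity[where p = f and n = 2 and x = h]
    by (simp add: power2_eq_square irreducible_not_unit)
  then have "\<not> f dvd k"
    using hk by auto
  have "f \<noteq> 0"
    using f by auto
  have "qscale f (qscale f (qmult (qmult P1 qk) (qcnj P1))) = qscale f (qscale k Lp)"
    using P by (simp add: P1 hk qscale_simps mult.assoc)
  then have "qscale f (qmult (qmult P1 qk) (qcnj P1)) = qscale k Lp"
    by (rule qscale_cancel[OF \<open>f \<noteq> 0\<close>])
  then have "f dvd k * rgcd Lp"
    by (metis dvd_rgcd_iff rgcd_qscale dvd_normalize_iff)
  then have "f dvd G"
    using f \<open>\<not> f dvd k\<close> \<open>f dvd h\<close>
    by (simp add: G_def prime_elem_dvd_mult_iff prime_elem_iff_irreducible[symmetric])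
  then have "f * f dvd h"
    using hG f_dvd G_def by (metis mult_dvd_mono)
  with simple show False ..
qed

section \<open>Null quaternions over the complex numbers\<close>

lemma qmult_annihilator_eq_qzero_iff:
  fixes x :: "'a::comm_ring_1 quat"
  assumes "\<sigma> * \<sigma> = -1"
  shows "qmult x (Quat 1 0 0 \<sigma>) = qzero \<longleftrightarrow> q3 x = - \<sigma> * q0 x \<and> q2 x = \<sigma> * q1 x"
proof
  assume "qmult x (Quat 1 0 0 \<sigma>) = qzero"
  then show "q3 x = - \<sigma> * q0 x \<and> q2 x = \<sigma> * q1 x"
    by (cases x) (simp add: qmult_def qzero_def eq_neg_iff_add_eq_0 algebra_simps)
next
  assume "q3 x = - \<sigma> * q0 x \<and> q2 x = \<sigma> * q1 x"
  then show "qmult x (Quat 1 0 0 \<sigma>) = qzero"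
    by (cases x) (simp add: qmult_def qzero_def algebra_simps assms)
qed

lemma qk_sandwich_eq_qzero_imp:
  fixes x :: "complex quat"
  assumes "qmult (qmult x qk) (qcnj x) = qzero"
  shows "\<exists>s\<in>{1, -1}. qmult x (Quat 1 0 0 (\<i> * of_real s)) = qzero"
proof -
  obtain p0 p1 p2 p3 where x: "x = Quat p0 p1 p2 p3"
    by (cases x)
  have E: "2 * (p1 * p3 + p0 * p2) = 0" "p2 * p3 - p0 * p1 = 0" "p0 * p0 + p3 * p3 = p1 * p1 + p2 * p2"
    using assms by (simp_all add: x qmult_def qcnj_def qk_def qzero_def algebra_simps)
  have ii: "\<i> * \<i> = (-1 :: complex)"
    by simp
  have "(p3 + \<i> * p0) * (p2 + \<i> * p1) = 0"
    using E ii by algebra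
  moreover have "(p3 - \<i> * p0) * (p2 - \<i> * p1) = 0"
    using E ii by algebra
  moreover have "(p3 + \<i> * p0) * (p3 - \<i> * p0) = (p2 - \<i> * p1) * (p2 + \<i> * p1)"
    using E ii by algebra
  ultimately consider "p3 + \<i> * p0 = 0 \<and> p2 - \<i> * p1 = 0" | "p3 - \<i> * p0 = 0 \<and> p2 + \<i> * p1 = 0"
    by (metis mult_eq_0_iff)
  then show ?thesis
  proof cases
    case 1
    then have "qmult x (Quat 1 0 0 (\<i> * of_real 1)) = qzero"
      by (simp add: x qmult_annihilator_eq_qzero_iff eq_neg_iff_add_eq_0 algebra_simps)
    then show ?thesis by blast
  next
    case 2
    then have "qmult x (Quat 1 0 0 (\<i> * of_real (-1))) = qzero"
      by (simp add: x qmult_annihilator_eq_qzero_iff eq_neg_iff_add_eq_0 algebra_simps)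
    then show ?thesis by blast
  qed
qed

lemma qmult_annihilator_transfer:
  fixes x y :: "'a::field_char_0 quat"
  assumes \<sigma>: "\<sigma> * \<sigma> = -1" and "x \<noteq> qzero" and x: "qmult x (Quat 1 0 0 \<sigma>) = qzero"
    and study: "qadd (qmult x (qcnj y)) (qmult y (qcnj x)) = qzero"
    and dual: "qadd (qneg (qmult (qmult x qk) (qcnj y))) (qneg (qmult (qmult y qk) (qcnj x))) = qzero"
  shows "qmult y (Quat 1 0 0 \<sigma>) = qzero"
proof -
  obtain p0 p1 p2 p3 where x_eq: "x = Quat p0 p1 p2 p3"
    by (cases x)
  obtain d0 d1 d2 d3 where y_eq: "y = Quat d0 d1 d2 d3"
    by (cases y)
  have p3: "p3 = - \<sigma> * p0" and p2: "p2 = \<sigma> * p1"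
    using x by (simp_all add: x_eq qmult_annihilator_eq_qzero_iff[OF \<sigma>])
  have S: "2 * (p0 * d0 + p1 * d1 + p2 * d2 + p3 * d3) = 0"
    using study by (simp add: x_eq y_eq qmult_def qcnj_def qadd_def qzero_def algebra_simps)
  have V: "2 * (p3 * d1 + p2 * d0 + p1 * d3 + p0 * d2) = 0"
    "2 * (p3 * d2 + p2 * d3 - p1 * d0 - p0 * d1) = 0" "2 * (p3 * d3 - p2 * d2 - p1 * d1 + p0 * d0) = 0"
    using dual unfolding x_eq y_eq qmult_def qcnj_def qadd_def qneg_def qk_def qzero_def
      quat.sel quat.inject by algebra+
  have "p0 * (d3 + \<sigma> * d0) = 0" and "p1 * (d3 + \<sigma> * d0) = 0"
    and "p0 * (d2 - \<sigma> * d1) = 0" and "p1 * (d2 - \<sigma> * d1) = 0"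
    using S V p2 p3 \<sigma> by algebra+
  moreover have "p0 \<noteq> 0 \<or> p1 \<noteq> 0"
    using \<open>x \<noteq> qzero\<close> p2 p3 by (auto simp: x_eq qzero_def)
  ultimately have "d3 + \<sigma> * d0 = 0" "d2 - \<sigma> * d1 = 0"
    by auto
  then show ?thesis
    by (simp add: y_eq qmult_annihilator_eq_qzero_iff[OF \<sigma>] eq_neg_iff_add_eq_0 algebra_simps)
qed

lemma three_eqs_eval_root_annihilated:
  fixes z :: complex
  assumes "three_eqs P D h Lp Ld" and "poly (map_poly of_real h) z = 0"
    and "eval_quat z P \<noteq> qzero"
  obtains s where "s \<in> {1, -1}"
    and "qmult (eval_quat z P) (Quat 1 0 0 (\<i> * of_real s)) = qzero"
    and "qmult (eval_quat z D) (Quat 1 0 0 (\<i> * of_real s)) = qzero"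
proof -
  note at_root = three_eqs_eval_root[OF assms(1,2)]
  obtain s where "s \<in> {1, -1}" and P: "qmult (eval_quat z P) (Quat 1 0 0 (\<i> * of_real s)) = qzero"
    using qk_sandwich_eq_qzero_imp[OF at_root(1)] by blast
  moreover have "(\<i> * of_real s) * (\<i> * of_real s) = (-1 :: complex)"
    using \<open>s \<in> {1, -1}\<close> by auto
  ultimately show ?thesis
    using that qmult_annihilator_transfer assms(3) at_root(2,3) by blast
qed

section \<open>Irreducible real quadratics\<close>

lemma irreducible_quadratic_real_poly:
  fixes f :: "real poly"
  assumes "degree f = 2" and "irreducible f"
  obtains c p q where "c \<noteq> 0" and "f = smult c ([:-p, 1:]^2 + [:q^2:])"
    and "poly (map_poly of_real f) (Complex p q) = 0"
proof -
  define a where "a = lead_coeff f"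
  have "f \<noteq> 0"
    using assms(1) by auto
  then have "a \<noteq> 0"
    by (simp add: a_def)
  have f_eq: "f = [:coeff f 0, coeff f 1, a:]"
    by (rule poly_eqI) (auto simp: a_def coeff_pCons coeff_eq_0 assms(1) numeral_2_eq_2 split: nat.split)
  define p where "p = - coeff f 1 / (2 * a)"
  define d where "d = coeff f 0 / a - p^2"
  have f_square: "f = smult a ([:-p, 1:]^2 + [:d:])"
    by (subst f_eq) (use \<open>a \<noteq> 0\<close> in \<open>simp add: p_def d_def power2_eq_square field_simps\<close>)
  have "d \<ge> 0"
  proof (rule ccontr)
    assume "\<not> d \<ge> 0"
    moreover have "poly f x = a * ((x - p)^2 + d)" for x
      by (subst f_square) (simp add: power2_eq_square algebra_simps)
    ultimately have "poly f (p + sqrt (- d)) = 0"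
      by simp
    with assms show False
      using root_imp_reducible_poly by fastforce
  qed
  then have f_sqrt: "f = smult a ([:-p, 1:]^2 + [:(sqrt d)^2:])"
    using f_square by simp
  moreover have "poly (map_poly of_real f) (Complex p (sqrt d)) = 0"
    by (subst f_sqrt) (simp add: map_poly_of_real_add map_poly_of_real_mult map_poly_pCons
        power2_eq_square complex_eq_iff algebra_simps)
  ultimately show ?thesis
    using that \<open>a \<noteq> 0\<close> by blast
qed

(* With r^2 = |c|, Q = r ((t - p) + s q k) commutes with k, so conj Q k Q = |c| ((t - p)^2 + q^2) k;
   for c < 0 take j Q instead, which flips the sign. At z = p + q i, conj Q(z) is (1 + i s k) r q i,
   respectively that times -j. *)
lemma exists_qk_sandwich_factor:
  fixes c p q s :: real
  assumes "c \<noteq> 0" and "s \<in> {1, -1}"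
  obtains Q :: "real poly quat" and w :: "complex quat"
  where "qmult (qmult (qcnj Q) qk) Q = qscale (smult c ([:-p, 1:]^2 + [:q^2:])) qk"
    and "qcnj (eval_quat (Complex p q) Q) = qmult (Quat 1 0 0 (\<i> * of_real s)) w"
proof -
  define r where "r = sqrt \<bar>c\<bar>"
  define A where "A = smult r [:-p, 1:]"
  define B where "B = [:r * s * q:]"
  have "r * r = \<bar>c\<bar>" and "s * s = 1"
    using assms by (auto simp: r_def)
  then have AB: "A * A + B * B = smult \<bar>c\<bar> ([:-p, 1:]^2 + [:q^2:])"
    by (simp add: A_def B_def power2_eq_square algebra_simps smult_add_right)
  have A_root: "poly (map_poly of_real A) (Complex p q) = of_real (r * q) * \<i>"
    by (simp add: A_def map_poly_pCons complex_eq_iff)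
  show ?thesis
  proof (cases "c > 0")
    case True
    show ?thesis
    proof (rule that[of "Quat A 0 0 B" "Quat (of_real (r * q) * \<i>) 0 0 0"])
      show "qmult (qmult (qcnj (Quat A 0 0 B)) qk) (Quat A 0 0 B)
          = qscale (smult c ([:-p, 1:]^2 + [:q^2:])) qk"
        using AB True by (simp add: qmult_def qcnj_def qk_def qscale_def algebra_simps)
      show "qcnj (eval_quat (Complex p q) (Quat A 0 0 B))
          = qmult (Quat 1 0 0 (\<i> * of_real s)) (Quat (of_real (r * q) * \<i>) 0 0 0)"
        using A_root by (simp add: eval_quat_def qcnj_def qmult_def B_def map_poly_pCons algebra_simps)
    qed
  next
    case False
    show ?thesis
    proof (rule that[of "Quat 0 B A 0" "Quat 0 0 (- of_real (r * q) * \<i>) 0"])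
      show "qmult (qmult (qcnj (Quat 0 B A 0)) qk) (Quat 0 B A 0)
          = qscale (smult c ([:-p, 1:]^2 + [:q^2:])) qk"
        using AB False by (simp add: qmult_def qcnj_def qk_def qscale_def algebra_simps)
      show "qcnj (eval_quat (Complex p q) (Quat 0 B A 0))
          = qmult (Quat 1 0 0 (\<i> * of_real s)) (Quat 0 0 (- of_real (r * q) * \<i>) 0)"
        using A_root by (simp add: eval_quat_def qcnj_def qmult_def B_def map_poly_pCons algebra_simps)
    qed
  qed
qed

theorem lemma7:
  fixes Lp Ld P D :: "real poly quat" and h f :: "real poly"
  assumes "line_poly Lp Ld"
    and "h \<noteq> 0"
    and "motion_poly P D"
    and "three_eqs P D h Lp Ld"
    and "degree f = 2" and "irreducible f"
    and "f dvd (h div gcd (rgcd Lp) h)"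
    and "multiplicity f h = 1"
  shows "\<exists>P' D'. motion_poly P' D' \<and> three_eqs P' D' (h div f) Lp Ld"
proof -
  obtain c p q where "c \<noteq> 0" and f_eq: "f = smult c ([:-p, 1:]^2 + [:q^2:])"
    and f_root: "poly (map_poly of_real f) (Complex p q) = 0"
    using irreducible_quadratic_real_poly[OF assms(5,6)] .
  define z where "z = Complex p q"
  have "f \<noteq> 0"
    using assms(5) by auto
  have "f dvd h"
    using assms(7) by (metis dvd_div_mult_self dvd_mult2 gcd_dvd2)
  then obtain g where h_eq: "h = f * g" ..
  have h_root: "poly (map_poly of_real h) z = 0"
    by (simp add: h_eq map_poly_of_real_mult f_root z_def)
  have "eval_quat z P \<noteq> qzero"
    using simple_factor_not_dvd_rgcd[OF assms(6,2,8,7)] assms(4)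
      eval_quat_eq_qzero_imp_dvd_rgcd[OF assms(6) f_root] by (auto simp: three_eqs_def z_def)
  then obtain s where "s \<in> {1, -1}"
    and "qmult (eval_quat z P) (Quat 1 0 0 (\<i> * of_real s)) = qzero"
    and "qmult (eval_quat z D) (Quat 1 0 0 (\<i> * of_real s)) = qzero"
    using three_eqs_eval_root_annihilated[OF assms(4) h_root] by blast
  moreover obtain Q w where Q: "qmult (qmult (qcnj Q) qk) Q = qscale f qk"
    and "qcnj (eval_quat z Q) = qmult (Quat 1 0 0 (\<i> * of_real s)) w"
    using exists_qk_sandwich_factor[OF \<open>c \<noteq> 0\<close> \<open>s \<in> {1, -1}\<close>, of p q]
    unfolding z_def f_eq[symmetric] by blast
  ultimately obtain P' D' where "qmult P (qcnj Q) = qscale f P'" and "qmult D (qcnj Q) = qscale f D'"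
    using qmult_qcnj_factor_of_annihilated[OF assms(6) f_root[folded z_def]] by metis
  then have "motion_poly P' D' \<and> three_eqs P' D' g Lp Ld"
    using motion_poly_divide[OF Q \<open>f \<noteq> 0\<close> assms(3)] assms(4) h_eq by blast
  then show ?thesis
    using \<open>f \<noteq> 0\<close> h_eq by auto
qed

end
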